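(* Every H\"older set $X\subseteq\mathbb{R}^d$ is simple, i.e. each $x\in X$ has a basis of neighborhoods $\mathscr U$ such that $U\cap\mathrm{int}(X)$ is connected for all $U\in\mathscr U$.
   Context: For $0<\alpha\le1$, $r,h>0$ let $\Gamma^\alpha_d(r,h)=\{(x',x_d)\in\mathbb{R}^{d-1}\times\mathbb{R}: |x'|<r,\ h(|x'|/r)^\alpha<x_d<h\}$. An open $U$ has the uniform cusp property of index $\alpha$ if for every $x\in\partial U$ there are $\epsilon>0$, some $\Gamma=\Gamma^\alpha_d(r,h)$ and $A\in O(d)$ with $y+A\Gamma\subseteq U$ for all $y\in\overline U\cap B(x,\epsilon)$. A H\"older set is a closed set $X$ with $X=\overline{\mathrm{int}(X)}\ne\emptyset$ such that $\mathrm{int}(X)$ has the uniform cusp property of some index $\alpha\in(0,1]$. *)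

theory Defs
  imports "HOL-Analysis.Analysis"
begin

text \<open>The distinguished "last" coordinate direction of the Euclidean space.
  Since the cusp property quantifies over all orthogonal transformations,
  the choice of unit vector is immaterial.\<close>
definition vert_dir :: "'a::euclidean_space" where
  "vert_dir = (SOME b. b \<in> Basis)"

text \<open>Decomposition x = (x', x_d): x_d = x \<bullet> e, x' = x - x_d e.\<close>
definition cusp :: "real \<Rightarrow> real \<Rightarrow> real \<Rightarrow> 'a::euclidean_space set" where
  "cusp \<alpha> r h = {z. norm (z - (z \<bullet> vert_dir) *\<^sub>R vert_dir) < r \<and>
      h * (norm (z - (z \<bullet> vert_dir) *\<^sub>R vert_dir) / r) powr \<alpha> < z \<bullet> vert_dir \<and>
      z \<bullet> vert_dir < h}"

definition uniform_cusp_property :: "real \<Rightarrow> 'a::euclidean_space set \<Rightarrow> bool" where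
  "uniform_cusp_property \<alpha> U \<longleftrightarrow>
     (\<forall>x\<in>frontier U. \<exists>\<epsilon>>0. \<exists>r>0. \<exists>h>0. \<exists>A::'a \<Rightarrow> 'a. orthogonal_transformation A \<and>
        (\<forall>y \<in> closure U \<inter> ball x \<epsilon>. (\<lambda>z. y + A z) ` cusp \<alpha> r h \<subseteq> U))"

definition hoelder_set :: "'a::euclidean_space set \<Rightarrow> bool" where
  "hoelder_set X \<longleftrightarrow> closed X \<and> X = closure (interior X) \<and> X \<noteq> {} \<and>
     (\<exists>\<alpha>::real. 0 < \<alpha> \<and> \<alpha> \<le> 1 \<and> uniform_cusp_property \<alpha> (interior X))"

definition nhds_basis_at :: "'a::topological_space \<Rightarrow> 'a set set \<Rightarrow> bool" where
  "nhds_basis_at x UU \<longleftrightarrow> (\<forall>U\<in>UU. x \<in> interior U) \<and>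
     (\<forall>V. open V \<and> x \<in> V \<longrightarrow> (\<exists>U\<in>UU. U \<subseteq> V))"

definition simple_set :: "'a::euclidean_space set \<Rightarrow> bool" where
  "simple_set X \<longleftrightarrow> (\<forall>x\<in>X. \<exists>UU. nhds_basis_at x UU \<and>
     (\<forall>U\<in>UU. connected (U \<inter> interior X)))"

end

theory Submission
  imports Defs
begin

text \<open>At a boundary point x, all points y of \<open>int X\<close> near x
  carry a translate of the same rotated cusp, whose axis points in a fixed direction a.
  Since the cusp is open, the cusp at x contains a small ball B around x + t a, and the
  segment from y to y + t a stays in \<open>int X\<close> and ends in B. The union of B with all these
  segments is a connected subset of \<open>int X\<close> containing every point of \<open>int X\<close> near x, and
  adjoining a small ball around x gives the required neighbourhood.\<close>

lemma vert_dir_in_Basis: "(vert_dir::'a::euclidean_space) \<in> Basis"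
  unfolding vert_dir_def by (rule someI_ex) (use nonempty_Basis in blast)

lemma inner_vert_dir_self [simp]: "vert_dir \<bullet> (vert_dir::'a::euclidean_space) = 1"
  using inner_Basis[OF vert_dir_in_Basis vert_dir_in_Basis] by simp

lemma open_cusp:
  assumes "0 < \<alpha>" "0 < r"
  shows "open (cusp \<alpha> r h :: 'a::euclidean_space set)"
proof -
  have "continuous_on UNIV
          (\<lambda>z::'a. (norm (z - (z \<bullet> vert_dir) *\<^sub>R vert_dir) / r) powr \<alpha>)"
    using assms by (intro continuous_on_powr' continuous_intros) auto
  then have "continuous_on UNIV
          (\<lambda>z::'a. h * (norm (z - (z \<bullet> vert_dir) *\<^sub>R vert_dir) / r) powr \<alpha>)"
    by (intro continuous_on_mult continuous_on_const)
  then show ?thesis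
    unfolding cusp_def
    by (intro open_Collect_conj open_Collect_less continuous_on_inner continuous_on_const
        continuous_on_id continuous_on_norm continuous_on_diff continuous_on_scaleR)
qed

lemma cusp_axis:
  assumes "0 < s" "s < h" "0 < r"
  shows "s *\<^sub>R vert_dir \<in> (cusp \<alpha> r h :: 'a::euclidean_space set)"
  using assms by (simp add: cusp_def)

lemma connected_through_shifted_ball:
  fixes U :: "'a::real_normed_vector set"
  assumes "0 < \<eta>" and ball_U: "ball (x + v) \<eta> \<subseteq> U"
    and segment_U: "\<And>y. y \<in> ball x \<eta> \<inter> U \<Longrightarrow> closed_segment y (y + v) \<subseteq> U"
  shows "\<exists>C. connected C \<and> ball x \<eta> \<inter> U \<subseteq> C \<and> C \<subseteq> U \<inter> ball x (\<eta> + norm v)"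
proof -
  define \<C> where "\<C> = (\<lambda>y. ball (x + v) \<eta> \<union> closed_segment y (y + v)) ` (ball x \<eta> \<inter> U)"
  have far_end: "y + v \<in> ball (x + v) \<eta>" if "y \<in> ball x \<eta>" for y
    using that by (simp add: dist_norm)
  have "connected (\<Union> (insert (ball (x + v) \<eta>) \<C>))"
  proof (rule connected_Union)
    have "connected (ball (x + v) \<eta> \<union> closed_segment y (y + v))" if "y \<in> ball x \<eta>" for y
      using far_end[OF that] ends_in_segment(2)[of "y + v" y]
      by (intro connected_Un connected_ball connected_segment) blast
    then show "connected S" if "S \<in> insert (ball (x + v) \<eta>) \<C>" for S
      using that by (auto simp: \<C>_def)
    show "\<Inter> (insert (ball (x + v) \<eta>) \<C>) \<noteq> {}"
      using \<open>0 < \<eta>\<close> by (auto simp: \<C>_def)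
  qed
  moreover have "ball x \<eta> \<inter> U \<subseteq> \<Union> (insert (ball (x + v) \<eta>) \<C>)"
    by (auto simp: \<C>_def)
  moreover have "ball (x + v) \<eta> \<subseteq> ball x (\<eta> + norm v)"
  proof
    fix z assume "z \<in> ball (x + v) \<eta>"
    moreover have "dist x z \<le> dist x (x + v) + dist (x + v) z"
      by (rule dist_triangle)
    ultimately show "z \<in> ball x (\<eta> + norm v)"
      by (simp add: dist_norm)
  qed
  moreover have "closed_segment y (y + v) \<subseteq> ball x (\<eta> + norm v)" if "y \<in> ball x \<eta>" for y
  proof (rule closed_segment_subset)
    show "y \<in> ball x (\<eta> + norm v)"
      using that norm_ge_zero[of v] unfolding mem_ball by linarith
    show "y + v \<in> ball x (\<eta> + norm v)"
      using far_end[OF that] \<open>ball (x + v) \<eta> \<subseteq> ball x (\<eta> + norm v)\<close> by blast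
  qed simp
  ultimately show ?thesis
    using ball_U segment_U unfolding \<C>_def by blast
qed

lemma connected_nbhd_from_uniform_cusps:
  fixes U :: "'a::euclidean_space set" and A :: "'a \<Rightarrow> 'a"
  assumes "0 < \<alpha>" "0 < \<epsilon>" "0 < r" "0 < h" and A: "orthogonal_transformation A"
    and cusps: "\<forall>y\<in>closure U \<inter> ball x \<epsilon>. (\<lambda>z. y + A z) ` cusp \<alpha> r h \<subseteq> U"
    and "x \<in> closure U" "0 < \<rho>"
  shows "\<exists>\<delta>>0. \<exists>C. connected C \<and> ball x \<delta> \<inter> U \<subseteq> C \<and> C \<subseteq> U \<inter> ball x \<rho>"
proof -
  have cusp_at: "(\<lambda>z. y + A z) ` cusp \<alpha> r h \<subseteq> U" if "y \<in> closure U" "dist x y < \<epsilon>" for y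
    using bspec[OF cusps, of y] that by simp
  define t where "t = min h \<rho> / 2"
  have t: "0 < t" "t < h" "t \<le> \<rho> / 2"
    using \<open>0 < h\<close> \<open>0 < \<rho>\<close> by (auto simp: t_def)
  obtain \<eta>\<^sub>0 where "0 < \<eta>\<^sub>0" and ball_cusp: "ball (t *\<^sub>R (vert_dir::'a)) \<eta>\<^sub>0 \<subseteq> cusp \<alpha> r h"
    using open_cusp[OF \<open>0 < \<alpha>\<close> \<open>0 < r\<close>] cusp_axis[OF t(1,2) \<open>0 < r\<close>]
    by (meson open_contains_ball)
  define \<eta> where "\<eta> = min \<eta>\<^sub>0 (min \<epsilon> (\<rho> / 2))"
  have "0 < \<eta>"
    using \<open>0 < \<eta>\<^sub>0\<close> \<open>0 < \<epsilon>\<close> \<open>0 < \<rho>\<close> by (simp add: \<eta>_def)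
  define v where "v = A (t *\<^sub>R vert_dir)"
  have "norm v = t"
    using A t(1) by (simp add: v_def orthogonal_transformation_norm norm_Basis[OF vert_dir_in_Basis])
  have "ball (x + v) \<eta> \<subseteq> ball (x + v) \<eta>\<^sub>0"
    by (rule subset_ball) (simp add: \<eta>_def)
  also have "\<dots> = (\<lambda>z. x + A z) ` ball (t *\<^sub>R vert_dir) \<eta>\<^sub>0"
    using image_add_ball[of x v \<eta>\<^sub>0]
    by (simp add: image_image[of "(+) x" A, symmetric] image_orthogonal_transformation_ball[OF A]
        v_def add.commute)
  also have "\<dots> \<subseteq> (\<lambda>z. x + A z) ` cusp \<alpha> r h"
    using ball_cusp by (rule image_mono)
  also have "\<dots> \<subseteq> U"
    using \<open>x \<in> closure U\<close> \<open>0 < \<epsilon>\<close> by (intro cusp_at) simp_all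
  finally have ball_U: "ball (x + v) \<eta> \<subseteq> U" .
  have segment_U: "closed_segment y (y + v) \<subseteq> U" if y: "y \<in> ball x \<eta> \<inter> U" for y
  proof
    fix w assume "w \<in> closed_segment y (y + v)"
    then obtain u where u: "0 \<le> u" "u \<le> 1" and "w = (1 - u) *\<^sub>R y + u *\<^sub>R (y + v)"
      unfolding in_segment by blast
    then have w: "w = y + A ((u * t) *\<^sub>R vert_dir)"
      by (simp add: v_def orthogonal_transformation_scaleR[OF A] scaleR_diff_left scaleR_add_right)
    show "w \<in> U"
    proof (cases "u = 0")
      case True
      then show ?thesis
        using y w by (simp add: linear_0[OF orthogonal_transformation_linear[OF A]])
    next
      case False
      have "0 < u * t" "u * t \<le> t"
        using False u t(1) by (simp_all add: mult_left_le_one_le)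
      then have "(u * t) *\<^sub>R vert_dir \<in> cusp \<alpha> r h"
        using t(2) \<open>0 < r\<close> by (intro cusp_axis) simp_all
      then have "w \<in> (\<lambda>z. y + A z) ` cusp \<alpha> r h"
        unfolding w by (rule imageI)
      moreover have "y \<in> closure U" "dist x y < \<epsilon>"
        using y closure_subset by (auto simp: \<eta>_def)
      ultimately show ?thesis
        using cusp_at by blast
    qed
  qed
  have "ball x (\<eta> + norm v) \<subseteq> ball x \<rho>"
    using \<open>norm v = t\<close> t(3) by (auto simp: \<eta>_def)
  moreover obtain C where "connected C" "ball x \<eta> \<inter> U \<subseteq> C" "C \<subseteq> U \<inter> ball x (\<eta> + norm v)"
    using connected_through_shifted_ball[OF \<open>0 < \<eta>\<close> ball_U segment_U] by blast
  ultimately show ?thesis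
    using \<open>0 < \<eta>\<close> by blast
qed

lemma simple_setI:
  fixes X :: "'a::euclidean_space set"
  assumes local: "\<And>x \<rho>. x \<in> X \<Longrightarrow> 0 < \<rho> \<Longrightarrow>
    \<exists>\<delta>>0. \<exists>C. connected C \<and> ball x \<delta> \<inter> interior X \<subseteq> C \<and> C \<subseteq> interior X \<inter> ball x \<rho>"
  shows "simple_set X"
  unfolding simple_set_def
proof
  fix x assume "x \<in> X"
  let ?\<U> = "{U. x \<in> interior U \<and> connected (U \<inter> interior X)}"
  have "\<exists>U\<in>?\<U>. U \<subseteq> V" if "open V" "x \<in> V" for V
  proof -
    obtain \<rho> where "0 < \<rho>" "ball x \<rho> \<subseteq> V"
      using \<open>open V\<close> \<open>x \<in> V\<close> open_contains_ball by blast
    then obtain \<delta> C where "0 < \<delta>" "connected C"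
      and C: "ball x \<delta> \<inter> interior X \<subseteq> C" "C \<subseteq> interior X \<inter> ball x \<rho>"
      using local[OF \<open>x \<in> X\<close>] by blast
    define U where "U = ball x (min \<delta> \<rho>) \<union> C"
    have "ball x (min \<delta> \<rho>) \<subseteq> interior U"
      by (rule interior_maximal) (auto simp: U_def)
    then have "x \<in> interior U"
      using \<open>0 < \<delta>\<close> \<open>0 < \<rho>\<close> by auto
    moreover have "U \<inter> interior X = C"
      using C by (auto simp: U_def)
    moreover have "U \<subseteq> V"
      using C \<open>ball x \<rho> \<subseteq> V\<close> by (auto simp: U_def)
    ultimately show ?thesis
      using \<open>connected C\<close> by blast
  qed
  then have "nhds_basis_at x ?\<U>"
    unfolding nhds_basis_at_def by blast
  then show "\<exists>\<U>. nhds_basis_at x \<U> \<and> (\<forall>U\<in>\<U>. connected (U \<inter> interior X))"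
    by blast
qed

theorem proposition3p9:
  fixes X :: "'a::euclidean_space set"
  assumes "hoelder_set X"
  shows "simple_set X"
proof (rule simple_setI)
  obtain \<alpha> where X: "X = closure (interior X)" and "0 < \<alpha>"
    and cusps: "uniform_cusp_property \<alpha> (interior X)"
    using assms unfolding hoelder_set_def by blast
  fix x \<rho> assume "x \<in> X" "0 < (\<rho>::real)"
  show "\<exists>\<delta>>0. \<exists>C. connected C \<and> ball x \<delta> \<inter> interior X \<subseteq> C \<and> C \<subseteq> interior X \<inter> ball x \<rho>"
  proof (cases "x \<in> interior X")
    case True
    then obtain d where "0 < d" "ball x d \<subseteq> interior X"
      using open_contains_ball open_interior by blast
    then show ?thesis
      using \<open>0 < \<rho>\<close> by (intro exI[of _ "min d \<rho>"] conjI exI[of _ "ball x (min d \<rho>)"]) auto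
  next
    case False
    with \<open>x \<in> X\<close> X have "x \<in> closure (interior X)" "x \<in> frontier (interior X)"
      by (simp_all add: frontier_def)
    with cusps obtain \<epsilon> r h and A :: "'a \<Rightarrow> 'a" where "0 < \<epsilon>" "0 < r" "0 < h"
      "orthogonal_transformation A"
      "\<forall>y\<in>closure (interior X) \<inter> ball x \<epsilon>. (\<lambda>z. y + A z) ` cusp \<alpha> r h \<subseteq> interior X"
      unfolding uniform_cusp_property_def by blast
    from connected_nbhd_from_uniform_cusps[OF \<open>0 < \<alpha>\<close> this \<open>x \<in> closure (interior X)\<close> \<open>0 < \<rho>\<close>]
    show ?thesis .
  qed
qed

end
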